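(* If $Q\in\mathcal{P}$ has full range, i.e. $\{Q(A):A\in\mathcal{F}\}=[0,1]$, then $D^*(v,Q)=L(v)$ for all $0<v<2$.
   Context: Let $(\Omega,\mathcal{F},\mu)$ be a finite or $\sigma$-finite measure space, and let $\mathcal{P}$ be the set of probability measures on $(\Omega,\mathcal{F})$ absolutely continuous with respect to $\mu$. For $P,Q\in\mathcal{P}$ the lower-case letters $p,q$ denote their densities with respect to $\mu$. The Kullback–Leibler divergence is $D(P\Vert Q)=\int\ln\frac{dP}{dQ}\,dP$ if $P\ll Q$, and $+\infty$ otherwise. The total variation distance is $V(P,Q)=\int_\Omega|p-q|\,d\mu$. For $v>0$ define $D^*(v,Q)=\inf\{D(P\Vert Q):P\in\mathcal{P},\ V(P,Q)\ge v\}$, with $\inf\emptyset=+\infty$. Vajda's function is $L(v)=\inf\{D(P\Vert Q):V(P,Q)=v\}$, where the infimum is over all pairs of probability measures $P,Q$ on a common measurable space. *)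

theory Defs
  imports "HOL-Probability.Probability"
begin

definition probs_ac :: "'a measure \<Rightarrow> 'a measure set" where
  "probs_ac \<mu> = {P. prob_space P \<and> sets P = sets \<mu> \<and> absolutely_continuous \<mu> P}"

text \<open>Kullback-Leibler divergence D(P||Q) = int ln (dP/dQ) dP if P << Q, and +infinity
  otherwise (the integral is +infinity when ln (dP/dQ) is not P-integrable; its negative
  part is always P-integrable).\<close>
definition KL_div :: "'a measure \<Rightarrow> 'a measure \<Rightarrow> ereal" where
  "KL_div P Q =
    (if sets P = sets Q \<and> absolutely_continuous Q P then
       (if integrable P (\<lambda>x. ln (enn2real (RN_deriv Q P x)))
        then ereal (\<integral>x. ln (enn2real (RN_deriv Q P x)) \<partial>P)
        else \<infinity>)
     else \<infinity>)"

definition TV :: "'a measure \<Rightarrow> 'a measure \<Rightarrow> 'a measure \<Rightarrow> real" where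
  "TV \<mu> P Q = (\<integral>x. \<bar>enn2real (RN_deriv \<mu> P x) - enn2real (RN_deriv \<mu> Q x)\<bar> \<partial>\<mu>)"

definition Dstar :: "'a measure \<Rightarrow> real \<Rightarrow> 'a measure \<Rightarrow> ereal" where
  "Dstar \<mu> v Q = Inf {KL_div P Q | P. P \<in> probs_ac \<mu> \<and> TV \<mu> P Q \<ge> v}"

text \<open>Vajda's function restricted to measurable spaces whose points have type 'b:
  infimum of D(P||Q) over all pairs of probability measures P, Q on a common measurable
  space (with carrier in type 'b) with V(P,Q) = v; V is computed w.r.t. any sigma-finite
  dominating measure (its value does not depend on the choice).  The true Vajda function
  L(v) is the infimum of vajda_L_on TYPE('b) v over all types 'b.\<close>
definition vajda_L_on :: "'b itself \<Rightarrow> real \<Rightarrow> ereal" where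
  "vajda_L_on _ v = Inf {KL_div P Q | (\<mu>::'b measure) P Q.
      sigma_finite_measure \<mu> \<and> P \<in> probs_ac \<mu> \<and> Q \<in> probs_ac \<mu> \<and> TV \<mu> P Q = v}"

end

theory Submission
  imports Defs
begin

(* Write p, q for densities w.r.t. the dominating measure mu, and let
     d(a,b) = a ln(a/b) + (1-a) ln((1-a)/(1-b))
   be the binary divergence, S_v the set of its values for 0 < b < 1, b <= a <= 1, a - b = v/2.

   By Scheffe's identity V(P,Q) = 2 (P(A) - Q(A)) for A = {q < p}.
   Integrating the tangent-line inequality ln(p/q) >= ln c + 1 - c q/p over A and over its
   complement, with c1 = a/Q(A), c2 = (1-a)/(1-Q(A)) and a = Q(A) + v/2, gives
   D(P||Q) >= d(a, Q(A)) whenever V(P,Q) >= v.  Hence D(P||Q) >= inf S_v, which bounds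
   both D*(v,Q) and Vajda's function from below.

   If Q(A) = b, the measure with Q-density a/b on A and (1-a)/(1-b) off A lies
   in P, has D = d(a,b) and V = 2(a-b).  When Q has full range every b in (0,1) occurs, so
   every element of S_v is realised with V = v exactly; thus D*(v,Q) = inf S_v = L(v). *)


section \<open>Real-valued densities with respect to a dominating measure\<close>

definition dens :: "'a measure \<Rightarrow> 'a measure \<Rightarrow> 'a \<Rightarrow> real" where
  "dens M P x = enn2real (RN_deriv M P x)"

lemma dens_measurable[measurable]: "dens M P \<in> borel_measurable M"
  unfolding dens_def by measurable

lemma dens_nonneg: "0 \<le> dens M P x"
  unfolding dens_def by simp

lemma integrable_indicator_prob:
  assumes "prob_space N" "A \<in> sets N"
  shows "integrable N (indicator A :: _ \<Rightarrow> real)"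
proof -
  interpret prob_space N by fact
  show ?thesis using assms(2) by (simp add: less_top[symmetric])
qed

lemma probs_acD:
  assumes "P \<in> probs_ac M"
  shows "prob_space P" "sets P = sets M" "space P = space M" "absolutely_continuous M P"
  using assms sets_eq_imp_space_eq unfolding probs_ac_def by auto

lemma dens_density:
  assumes M: "sigma_finite_measure M" and P: "P \<in> probs_ac M"
  shows "density M (\<lambda>x. ennreal (dens M P x)) = P"
proof -
  interpret sigma_finite_measure M by fact
  interpret Pp: prob_space P using probs_acD[OF P] by simp
  have ac: "absolutely_continuous M P" "sets P = sets M" using probs_acD[OF P] by auto
  from RN_deriv_finite[OF Pp.sigma_finite_measure_axioms ac]
  have "AE x in M. RN_deriv M P x = ennreal (dens M P x)"
    by eventually_elim (auto simp: dens_def less_top)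
  then have "density M (RN_deriv M P) = density M (\<lambda>x. ennreal (dens M P x))"
    by (intro density_cong) auto
  with density_RN_deriv[OF ac] show ?thesis by simp
qed

lemma dens_integral:
  assumes M: "sigma_finite_measure M" and P: "P \<in> probs_ac M"
    and f: "f \<in> borel_measurable M"
  shows "integral\<^sup>L P f = (\<integral>x. dens M P x * f x \<partial>M)"
    and "integrable P f \<longleftrightarrow> integrable M (\<lambda>x. dens M P x * f x)"
proof -
  interpret sigma_finite_measure M by fact
  interpret Pp: prob_space P using probs_acD[OF P] by simp
  have ac: "absolutely_continuous M P" "sets P = sets M" using probs_acD[OF P] by auto
  show "integral\<^sup>L P f = (\<integral>x. dens M P x * f x \<partial>M)"
    unfolding dens_def by (rule RN_deriv_integral[OF Pp.sigma_finite_measure_axioms ac f])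
  show "integrable P f \<longleftrightarrow> integrable M (\<lambda>x. dens M P x * f x)"
    unfolding dens_def by (rule RN_deriv_integrable[OF Pp.sigma_finite_measure_axioms ac f])
qed

lemma dens_integrable:
  assumes M: "sigma_finite_measure M" and P: "P \<in> probs_ac M"
  shows "integrable M (dens M P)" "(\<integral>x. dens M P x \<partial>M) = 1"
proof -
  interpret Pp: prob_space P using probs_acD[OF P] by simp
  show "integrable M (dens M P)" using dens_integral(2)[OF M P, of "\<lambda>x. 1"] by simp
  show "(\<integral>x. dens M P x \<partial>M) = 1"
    using dens_integral(1)[OF M P, of "\<lambda>x. 1"] by (simp add: Pp.prob_space)
qed

lemma dens_measure:
  assumes M: "sigma_finite_measure M" and P: "P \<in> probs_ac M" and A: "A \<in> sets M"
  shows "measure P A = (\<integral>x. dens M P x * indicator A x \<partial>M)"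
    and "integrable M (\<lambda>x. dens M P x * indicator A x)"
proof -
  interpret Pp: prob_space P using probs_acD[OF P] by simp
  have A': "A \<in> sets P" using A probs_acD[OF P] by simp
  then show "measure P A = (\<integral>x. dens M P x * indicator A x \<partial>M)"
    using dens_integral(1)[OF M P, of "indicator A"] A by simp
  have "integrable P (indicator A :: _ \<Rightarrow> real)"
    using A' by (rule integrable_indicator_prob[OF Pp.prob_space_axioms])
  then show "integrable M (\<lambda>x. dens M P x * indicator A x)"
    using dens_integral(2)[OF M P, of "indicator A"] A by simp
qed

lemma TV_Scheffe:
  assumes M: "sigma_finite_measure M" and P: "P \<in> probs_ac M" and Q: "Q \<in> probs_ac M"
  defines "A \<equiv> {x\<in>space M. dens M Q x < dens M P x}"
  shows "TV M P Q = 2 * (measure P A - measure Q A)"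
proof -
  have A: "A \<in> sets M" unfolding A_def by measurable
  note iP = dens_integrable[OF M P] and iQ = dens_integrable[OF M Q]
  note mP = dens_measure[OF M P A] and mQ = dens_measure[OF M Q A]
  have "TV M P Q = (\<integral>x. 2 * (dens M P x * indicator A x - dens M Q x * indicator A x)
        - (dens M P x - dens M Q x) \<partial>M)"
    unfolding TV_def dens_def[symmetric]
    by (intro Bochner_Integration.integral_cong refl) (auto simp: A_def indicator_def)
  also have "\<dots> = 2 * (measure P A - measure Q A)"
    using iP iQ mP mQ by simp
  finally show ?thesis .
qed


section \<open>The Radon-Nikodym derivative dP/dQ as a ratio of densities\<close>

lemma dens_zero_null:
  assumes M: "sigma_finite_measure M" and P: "P \<in> probs_ac M"
  shows "emeasure P {x\<in>space M. dens M P x = 0} = 0"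
proof -
  let ?Z = "{x\<in>space M. dens M P x = 0}"
  have Z: "?Z \<in> sets M" by measurable
  have "emeasure P ?Z = (\<integral>\<^sup>+x. ennreal (dens M P x) * indicator ?Z x \<partial>M)"
    using Z by (subst dens_density[OF M P, symmetric]) (simp add: emeasure_density)
  also have "\<dots> = (\<integral>\<^sup>+x. 0 \<partial>M)"
    by (intro nn_integral_cong) (auto simp: indicator_def)
  finally show ?thesis by simp
qed

lemma AE_dens_pos:
  assumes M: "sigma_finite_measure M" and P: "P \<in> probs_ac M"
  shows "AE x in P. 0 < dens M P x"
proof -
  have Z: "{x\<in>space M. dens M P x = 0} \<in> sets P" using probs_acD(2)[OF P] by measurable
  have "AE x in P. x \<notin> {x\<in>space M. dens M P x = 0}"
    using dens_zero_null[OF M P] Z by (intro AE_not_in) auto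
  then show ?thesis
    using probs_acD(3)[OF P] by (elim AE_mp) (intro AE_I2, auto simp: less_le dens_nonneg)
qed

lemma AE_dens_ac_zero:
  assumes M: "sigma_finite_measure M" and P: "P \<in> probs_ac M" and Q: "Q \<in> probs_ac M"
    and ac: "absolutely_continuous Q P"
  shows "AE x in M. dens M Q x = 0 \<longrightarrow> dens M P x = 0"
proof -
  let ?Z = "{x\<in>space M. dens M Q x = 0}"
  have Z: "?Z \<in> sets M" by measurable
  have "emeasure P ?Z = 0"
    using Z probs_acD(2)[OF Q] dens_zero_null[OF M Q] by (intro absolutely_continuousD[OF ac]) auto
  then have "(\<integral>\<^sup>+x. ennreal (dens M P x) * indicator ?Z x \<partial>M) = 0"
    using Z by (subst (asm) dens_density[OF M P, symmetric]) (simp add: emeasure_density)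
  then have "AE x in M. ennreal (dens M P x) * indicator ?Z x = 0"
    by (subst (asm) nn_integral_0_iff_AE) auto
  then show ?thesis
    by (elim AE_mp) (intro AE_I2, insert dens_nonneg[of M P], auto simp: indicator_def intro: antisym)
qed

lemma RN_deriv_ratio:
  assumes M: "sigma_finite_measure M" and P: "P \<in> probs_ac M" and Q: "Q \<in> probs_ac M"
    and ac: "absolutely_continuous Q P"
  shows "AE x in P. RN_deriv Q P x = ennreal (dens M P x / dens M Q x)"
proof -
  interpret Qp: prob_space Q using probs_acD[OF Q] by simp
  have sQ: "sets Q = sets M" using probs_acD[OF Q] by simp
  have "density Q (\<lambda>x. ennreal (dens M P x / dens M Q x)) =
      density (density M (\<lambda>x. ennreal (dens M Q x))) (\<lambda>x. ennreal (dens M P x / dens M Q x))"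
    using dens_density[OF M Q] by simp
  also have "\<dots> = density M (\<lambda>x. ennreal (dens M P x))"
    by (rule density_density_divide) (auto simp: dens_nonneg AE_dens_ac_zero[OF M P Q ac])
  also have "\<dots> = P" by (rule dens_density[OF M P])
  finally have "AE x in Q. ennreal (dens M P x / dens M Q x) = RN_deriv Q P x"
    by (intro Qp.RN_deriv_unique) (simp add: measurable_cong_sets[OF sQ refl])
  then show ?thesis
    using probs_acD[OF P] probs_acD[OF Q] ac
    by (intro absolutely_continuous_AE[of P Q]) (auto elim!: AE_mp)
qed


section \<open>A variational lower bound for the KL divergence\<close>

lemma ln_ratio_lower:
  fixes p q c :: real
  assumes "0 < p" "0 < q" "0 < c"
  shows "ln c + 1 - c * (q / p) \<le> ln (p / q)"
proof -
  have "ln (c * q / p) \<le> c * q / p - 1" using assms by (intro ln_le_minus_one) simp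
  moreover have "ln (c * q / p) = ln c + ln q - ln p" using assms by (simp add: ln_mult ln_div)
  moreover have "ln (p / q) = ln p - ln q" using assms by (simp add: ln_div)
  ultimately show ?thesis by simp
qed

lemma integral_dens_ratio:
  assumes M: "sigma_finite_measure M" and P: "P \<in> probs_ac M" and Q: "Q \<in> probs_ac M"
    and A: "A \<in> sets M"
  shows "integrable P (\<lambda>x. indicator A x * (dens M Q x / dens M P x))"
    and "(\<integral>x. indicator A x * (dens M Q x / dens M P x) \<partial>P) \<le> measure Q A"
proof -
  let ?f = "\<lambda>x. indicator A x * (dens M Q x / dens M P x)"
  have fm: "?f \<in> borel_measurable M" using A by measurable
  have ib: "integrable M (\<lambda>x. dens M Q x * indicator A x)" by (rule dens_measure(2)[OF M Q A])
  have le: "\<And>x. dens M P x * ?f x \<le> dens M Q x * indicator A x"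
    using dens_nonneg[of M Q] by (auto simp: indicator_def)
  have im: "integrable M (\<lambda>x. dens M P x * ?f x)"
  proof (rule Bochner_Integration.integrable_bound[OF ib])
    show "(\<lambda>x. dens M P x * ?f x) \<in> borel_measurable M" using fm by measurable
    show "AE x in M. norm (dens M P x * ?f x) \<le> norm (dens M Q x * indicator A x)"
      using le dens_nonneg[of M Q] dens_nonneg[of M P] by (intro AE_I2) (auto simp: indicator_def)
  qed
  then show "integrable P ?f" using dens_integral(2)[OF M P fm] by simp
  have "(\<integral>x. ?f x \<partial>P) = (\<integral>x. dens M P x * ?f x \<partial>M)" by (rule dens_integral(1)[OF M P fm])
  also have "\<dots> \<le> (\<integral>x. dens M Q x * indicator A x \<partial>M)"
    by (rule integral_mono[OF im ib le])
  also have "\<dots> = measure Q A" by (rule dens_measure(1)[OF M Q A, symmetric])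
  finally show "(\<integral>x. ?f x \<partial>P) \<le> measure Q A" .
qed

text \<open>Since dP/dQ = p/q P-almost everywhere, the tangent-line inequality bounds ln(dP/dQ) from
  below by ln c + 1 - c q/p, simultaneously for all c > 0.\<close>
lemma AE_ln_RN_deriv_lower:
  assumes M: "sigma_finite_measure M" and P: "P \<in> probs_ac M" and Q: "Q \<in> probs_ac M"
    and ac: "absolutely_continuous Q P"
  shows "AE x in P. \<forall>c>0. ln c + 1 - c * (dens M Q x / dens M P x) \<le> ln (enn2real (RN_deriv Q P x))"
proof -
  have q_pos: "AE x in P. 0 < dens M Q x"
    using AE_dens_pos[OF M Q] probs_acD[OF P] probs_acD[OF Q]
    by (intro absolutely_continuous_AE[OF _ ac]) auto
  show ?thesis
    using RN_deriv_ratio[OF M P Q ac] AE_dens_pos[OF M P] q_pos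
  proof eventually_elim
    case (elim x)
    then have "enn2real (RN_deriv Q P x) = dens M P x / dens M Q x" by (simp add: dens_nonneg)
    then show ?case using elim by (intro allI impI, simp only:) (rule ln_ratio_lower)
  qed
qed

text \<open>Integrating the tangent-line inequality over one measurable set A.  The constant c may
  vanish only if A is P-null (recall that ln 0 = 0 in HOL).\<close>
lemma KL_integrand_lower_on_set:
  assumes M: "sigma_finite_measure M" and P: "P \<in> probs_ac M" and Q: "Q \<in> probs_ac M"
    and ac: "absolutely_continuous Q P"
    and int: "integrable P (\<lambda>x. ln (enn2real (RN_deriv Q P x)))"
    and A: "A \<in> sets M" and c: "0 \<le> c" and c_pos: "0 < c \<or> measure P A = 0"
  shows "measure P A * (ln c + 1) - c * measure Q A
         \<le> (\<integral>x. indicator A x * ln (enn2real (RN_deriv Q P x)) \<partial>P)"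
proof -
  interpret Pp: prob_space P using probs_acD[OF P] by simp
  note sP = probs_acD(2)[OF P]
  let ?h = "\<lambda>x. indicator A x * (dens M Q x / dens M P x)"
  let ?G = "\<lambda>x. indicator A x * (ln c + 1) - c * ?h x"
  note h = integral_dens_ratio[OF M P Q A]
  have iA: "integrable P (indicator A :: _ \<Rightarrow> real)"
    using A sP by (intro integrable_indicator_prob[OF Pp.prob_space_axioms]) simp
  have c_pos_AE: "AE x in P. x \<in> A \<longrightarrow> 0 < c"
  proof (cases "0 < c")
    case False
    then have "A \<in> null_sets P"
      using c_pos A sP by (simp add: null_sets_def Pp.emeasure_eq_measure)
    then show ?thesis by (rule AE_not_in[THEN AE_mp]) simp
  qed simp
  have "AE x in P. ?G x \<le> indicator A x * ln (enn2real (RN_deriv Q P x))"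
    using c_pos_AE AE_ln_RN_deriv_lower[OF M P Q ac]
    by eventually_elim (simp add: indicator_def)
  moreover have "integrable P ?G"
    using iA h(1) by (intro Bochner_Integration.integrable_diff integrable_mult_left integrable_mult_right)
  moreover have "integrable P (\<lambda>x. indicator A x * ln (enn2real (RN_deriv Q P x)))"
    using integrable_mult_indicator[OF _ int, of A] A sP by simp
  ultimately have "(\<integral>x. ?G x \<partial>P) \<le> (\<integral>x. indicator A x * ln (enn2real (RN_deriv Q P x)) \<partial>P)"
    by (intro integral_mono_AE)
  moreover have "(\<integral>x. ?G x \<partial>P) = measure P A * (ln c + 1) - c * (\<integral>x. ?h x \<partial>P)"
    using iA h(1) A sP by (simp add: Pp.emeasure_eq_measure del: times_divide_eq_right)
  moreover have "c * (\<integral>x. ?h x \<partial>P) \<le> c * measure Q A"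
    using h(2) c by (intro mult_left_mono)
  ultimately show ?thesis by simp
qed

lemma KL_integral_lower:
  assumes M: "sigma_finite_measure M" and P: "P \<in> probs_ac M" and Q: "Q \<in> probs_ac M"
    and ac: "absolutely_continuous Q P"
    and int: "integrable P (\<lambda>x. ln (enn2real (RN_deriv Q P x)))"
    and A: "A \<in> sets M" and c1: "0 \<le> c1" and c2: "0 \<le> c2"
    and c1_pos: "0 < c1 \<or> measure P A = 0"
    and c2_pos: "0 < c2 \<or> measure P (space M - A) = 0"
  shows "measure P A * ln c1 + measure P (space M - A) * ln c2 + 1
           - c1 * measure Q A - c2 * measure Q (space M - A)
         \<le> (\<integral>x. ln (enn2real (RN_deriv Q P x)) \<partial>P)"
proof -
  interpret Pp: prob_space P using probs_acD[OF P] by simp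
  note sP = probs_acD(2,3)[OF P]
  let ?L = "\<lambda>x. ln (enn2real (RN_deriv Q P x))"
  have Ac: "space M - A \<in> sets M" using A by auto
  have "(\<integral>x. ?L x \<partial>P) = (\<integral>x. indicator A x * ?L x + indicator (space M - A) x * ?L x \<partial>P)"
    using sP by (intro Bochner_Integration.integral_cong) (auto simp: indicator_def)
  also have "\<dots> = (\<integral>x. indicator A x * ?L x \<partial>P) + (\<integral>x. indicator (space M - A) x * ?L x \<partial>P)"
    using integrable_mult_indicator[OF _ int, of A] integrable_mult_indicator[OF _ int, of "space M - A"]
      A Ac sP by (intro Bochner_Integration.integral_add) auto
  finally have split: "(\<integral>x. ?L x \<partial>P) = \<dots>" .
  have "measure P A + measure P (space M - A) = 1"
    using Pp.prob_compl[of A] A sP by simp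
  then show ?thesis
    using split KL_integrand_lower_on_set[OF M P Q ac int A c1 c1_pos]
      KL_integrand_lower_on_set[OF M P Q ac int Ac c2 c2_pos]
    by (simp add: algebra_simps)
qed


section \<open>Reduction to the binary divergence\<close>

definition binary_KL :: "real \<Rightarrow> real \<Rightarrow> real" where
  "binary_KL a b = a * ln (a / b) + (1 - a) * ln ((1 - a) / (1 - b))"

text \<open>The values of the binary divergence d(a,b) with a - b = v/2; their infimum is L(v).\<close>
definition binary_KL_values :: "real \<Rightarrow> ereal set" where
  "binary_KL_values v =
     {ereal (binary_KL a b) | a b. 0 < b \<and> b < 1 \<and> b \<le> a \<and> a \<le> 1 \<and> a - b = v / 2}"

text \<open>Replacing the first argument a of the logarithmic terms by any alpha >= a only increases
  them, since ln(a/b) >= 0 >= ln((1-a)/(1-b)).\<close>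
lemma binary_KL_le_mixed:
  fixes a b \<alpha> :: real
  assumes "0 < b" "b < 1" "b \<le> a" "a \<le> \<alpha>" "\<alpha> \<le> 1"
  shows "binary_KL a b \<le> \<alpha> * ln (a / b) + (1 - \<alpha>) * ln ((1 - a) / (1 - b))"
proof -
  have "0 \<le> ln (a / b)" using assms by simp
  moreover have "ln ((1 - a) / (1 - b)) \<le> 0"
    using assms by (cases "a = 1") (auto simp: ln_le_zero_iff)
  ultimately have "0 \<le> (\<alpha> - a) * (ln (a / b) - ln ((1 - a) / (1 - b)))"
    using assms(4) by (intro mult_nonneg_nonneg) auto
  then show ?thesis by (simp add: binary_KL_def algebra_simps)
qed

text \<open>Choosing c1 = a/Q(A) and c2 = (1-a)/(1-Q(A)) in the two-set bound shows that the
  binary divergence d(a, Q(A)) is a lower bound whenever Q(A) <= a <= P(A).\<close>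
lemma KL_integral_ge_binary_KL:
  assumes M: "sigma_finite_measure M" and P: "P \<in> probs_ac M" and Q: "Q \<in> probs_ac M"
    and ac: "absolutely_continuous Q P"
    and int: "integrable P (\<lambda>x. ln (enn2real (RN_deriv Q P x)))"
    and A: "A \<in> sets M" and \<beta>: "0 < measure Q A" "measure Q A < 1"
    and a: "measure Q A \<le> a" "a \<le> measure P A"
  shows "binary_KL a (measure Q A) \<le> (\<integral>x. ln (enn2real (RN_deriv Q P x)) \<partial>P)"
proof -
  interpret Pp: prob_space P using probs_acD[OF P] by simp
  interpret Qp: prob_space Q using probs_acD[OF Q] by simp
  note sP = probs_acD(2,3)[OF P] and sQ = probs_acD(2,3)[OF Q]
  define \<alpha> where "\<alpha> = measure P A"
  define \<beta> where "\<beta> = measure Q A"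
  have range: "0 < \<beta>" "\<beta> < 1" "\<beta> \<le> a" "a \<le> \<alpha>" "\<alpha> \<le> 1"
    using \<beta> a by (auto simp: \<alpha>_def \<beta>_def)
  define c1 where "c1 = a / \<beta>"
  define c2 where "c2 = (1 - a) / (1 - \<beta>)"
  have compl: "measure P (space M - A) = 1 - \<alpha>" "measure Q (space M - A) = 1 - \<beta>"
    using Pp.prob_compl[of A] Qp.prob_compl[of A] A sP sQ by (simp_all add: \<alpha>_def \<beta>_def)
  have c2_pos: "0 < c2 \<or> measure P (space M - A) = 0"
    using range compl by (cases "a < 1") (auto simp: c2_def)
  have "\<alpha> * ln c1 + (1 - \<alpha>) * ln c2 + 1 - c1 * \<beta> - c2 * (1 - \<beta>)
        \<le> (\<integral>x. ln (enn2real (RN_deriv Q P x)) \<partial>P)"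
    using KL_integral_lower[OF M P Q ac int A, of c1 c2] range c2_pos compl
    by (simp add: \<alpha>_def \<beta>_def c1_def c2_def)
  moreover have "c1 * \<beta> = a" "c2 * (1 - \<beta>) = 1 - a" using range by (auto simp: c1_def c2_def)
  ultimately show ?thesis
    using binary_KL_le_mixed[OF range] by (simp add: c1_def c2_def \<beta>_def)
qed

text \<open>Main lower bound: on any measurable space, V(P,Q) >= v > 0 forces
  D(P||Q) >= inf of the binary divergences with a - b = v/2.  Apply the previous lemma
  to Scheffe's set A = {q < p} and a = Q(A) + v/2.\<close>
lemma KL_ge_binary_KL_values:
  assumes M: "sigma_finite_measure M" and P: "P \<in> probs_ac M" and Q: "Q \<in> probs_ac M"
    and v: "0 < v" "v \<le> TV M P Q"
  shows "Inf (binary_KL_values v) \<le> KL_div P Q"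
proof (cases "absolutely_continuous Q P \<and> integrable P (\<lambda>x. ln (enn2real (RN_deriv Q P x)))")
  case False
  then show ?thesis unfolding KL_div_def by auto
next
  case True
  then have ac: "absolutely_continuous Q P"
    and int: "integrable P (\<lambda>x. ln (enn2real (RN_deriv Q P x)))" by auto
  have KL: "KL_div P Q = ereal (\<integral>x. ln (enn2real (RN_deriv Q P x)) \<partial>P)"
    using True probs_acD[OF P] probs_acD[OF Q] unfolding KL_div_def by auto
  interpret Qp: prob_space Q using probs_acD[OF Q] by simp
  define A where "A = {x\<in>space M. dens M Q x < dens M P x}"
  have A: "A \<in> sets M" unfolding A_def by measurable
  define a where "a = measure Q A + v / 2"
  have gap: "v / 2 \<le> measure P A - measure Q A"
    using v TV_Scheffe[OF M P Q] by (simp add: A_def)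
  have Q_pos: "0 < measure Q A"
  proof (rule ccontr)
    assume "\<not> 0 < measure Q A"
    then have Q0: "measure Q A = 0" using measure_nonneg[of Q A] by simp
    then have "emeasure Q A = 0"
      using A probs_acD(2)[OF Q] by (simp add: Qp.emeasure_eq_measure)
    then have "emeasure P A = 0"
      using A probs_acD(2)[OF Q] by (intro absolutely_continuousD[OF ac]) auto
    then have "measure P A = 0" by (simp add: measure_def)
    then show False using gap v Q0 by simp
  qed
  have range: "0 < measure Q A" "measure Q A < 1" "measure Q A \<le> a" "a \<le> measure P A"
    using Q_pos gap v prob_space.prob_le_1[OF probs_acD(1)[OF P], of A] by (auto simp: a_def)
  moreover have "a \<le> 1" "a - measure Q A = v / 2"
    using range(4) prob_space.prob_le_1[OF probs_acD(1)[OF P], of A] by (auto simp: a_def)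
  ultimately have "ereal (binary_KL a (measure Q A)) \<in> binary_KL_values v"
    unfolding binary_KL_values_def by blast
  then show ?thesis
    using KL_integral_ge_binary_KL[OF M P Q ac int A range]
    unfolding KL by (meson Inf_lower2 ereal_less_eq(3))
qed


section \<open>Attaining the binary divergence with a two-level density\<close>

definition two_level :: "'a set \<Rightarrow> 'a set \<Rightarrow> real \<Rightarrow> real \<Rightarrow> 'a \<Rightarrow> real" where
  "two_level \<Omega> A c1 c2 x = c1 * indicator A x + c2 * indicator (\<Omega> - A) x"

lemma two_level_measurable:
  assumes [measurable]: "A \<in> sets N" and "space N = \<Omega>"
  shows "two_level \<Omega> A c1 c2 \<in> borel_measurable N"
  using assms(2) unfolding two_level_def by (subst assms(2)[symmetric]) measurable

lemma two_level_integral: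
  assumes N: "prob_space N" and A: "A \<in> sets N" and \<Omega>: "space N = \<Omega>"
  shows "integrable N (two_level \<Omega> A c1 c2)"
    and "(\<integral>x. two_level \<Omega> A c1 c2 x \<partial>N) = c1 * measure N A + c2 * (1 - measure N A)"
proof -
  interpret prob_space N by fact
  have Ac: "\<Omega> - A \<in> sets N" using A \<Omega> by auto
  show "integrable N (two_level \<Omega> A c1 c2)"
    using A Ac unfolding two_level_def by (simp add: less_top[symmetric])
  have "A \<inter> \<Omega> = A" using sets.sets_into_space[OF A] \<Omega> by auto
  then show "(\<integral>x. two_level \<Omega> A c1 c2 x \<partial>N) = c1 * measure N A + c2 * (1 - measure N A)"
    using A Ac prob_compl[OF A] \<Omega> unfolding two_level_def
    by (simp add: less_top[symmetric] Int_absorb2)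
qed

lemma ln_two_level:
  assumes "A \<subseteq> \<Omega>"
  shows "ln (two_level \<Omega> A c1 c2 x) = two_level \<Omega> A (ln c1) (ln c2) x"
  using assms by (auto simp: two_level_def indicator_def)

lemma abs_two_level_minus_one:
  assumes "x \<in> \<Omega>" "c2 \<le> 1" "1 \<le> c1"
  shows "\<bar>two_level \<Omega> A c1 c2 x - 1\<bar> = two_level \<Omega> A (c1 - 1) (1 - c2) x"
  using assms by (auto simp: two_level_def indicator_def)

lemma KL_div_density:
  fixes Q :: "'a measure" and r :: "'a \<Rightarrow> real"
  defines "P \<equiv> density Q (\<lambda>x. ennreal (r x))"
  assumes r[measurable]: "r \<in> borel_measurable Q" and nn: "\<And>x. 0 \<le> r x"
    and P_prob: "prob_space P" and int: "integrable P (\<lambda>x. ln (r x))"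
  shows "KL_div P Q = ereal (\<integral>x. ln (r x) \<partial>P)"
proof -
  have sP: "sets P = sets Q" and ac: "absolutely_continuous Q P"
    unfolding P_def by (auto intro!: absolutely_continuousI_density)
  have "AE x in Q. ennreal (r x) = RN_deriv Q P x"
    using P_prob unfolding P_def
    by (intro RN_deriv_unique_sigma_finite) (auto intro: prob_space_imp_sigma_finite)
  then have "AE x in Q. RN_deriv Q P x = ennreal (r x)"
    by eventually_elim simp
  then have "AE x in Q. ln (r x) = ln (enn2real (RN_deriv Q P x))"
    by eventually_elim (simp add: nn)
  then have eq: "AE x in P. ln (r x) = ln (enn2real (RN_deriv Q P x))"
    by (rule absolutely_continuous_AE[OF sP ac])
  have mL: "(\<lambda>x. ln (enn2real (RN_deriv Q P x))) \<in> borel_measurable P"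
    by (simp add: measurable_cong_sets[OF sP refl])
  have "integrable P (\<lambda>x. ln (enn2real (RN_deriv Q P x)))"
    by (rule integrable_cong_AE_imp[OF int mL eq])
  moreover have "(\<integral>x. ln (r x) \<partial>P) = (\<integral>x. ln (enn2real (RN_deriv Q P x)) \<partial>P)"
    using eq mL by (intro integral_cong_AE) (auto simp: measurable_cong_sets[OF sP refl])
  ultimately show ?thesis
    using sP ac unfolding KL_div_def by simp
qed

lemma dens_density_mult:
  assumes M: "sigma_finite_measure M" and Q: "Q \<in> probs_ac M"
    and r[measurable]: "r \<in> borel_measurable M" and nn: "\<And>x. 0 \<le> r x"
  shows "AE x in M. dens M (density Q (\<lambda>x. ennreal (r x))) x = dens M Q x * r x"
proof -
  interpret sigma_finite_measure M by fact
  have "density Q (\<lambda>x. ennreal (r x)) = density M (\<lambda>x. ennreal (dens M Q x * r x))"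
    by (subst dens_density[OF M Q, symmetric], subst density_density_eq)
      (auto simp: ennreal_mult dens_nonneg nn)
  then have "AE x in M. ennreal (dens M Q x * r x) = RN_deriv M (density Q (\<lambda>x. ennreal (r x))) x"
    by (intro RN_deriv_unique) auto
  then have "AE x in M. RN_deriv M (density Q (\<lambda>x. ennreal (r x))) x = ennreal (dens M Q x * r x)"
    by eventually_elim simp
  then show ?thesis
    by eventually_elim (simp add: dens_def[of M "density Q _"] mult_nonneg_nonneg[OF dens_nonneg nn])
qed

lemma TV_density:
  assumes M: "sigma_finite_measure M" and Q: "Q \<in> probs_ac M"
    and r[measurable]: "r \<in> borel_measurable M" and nn: "\<And>x. 0 \<le> r x"
  shows "TV M (density Q (\<lambda>x. ennreal (r x))) Q = (\<integral>x. \<bar>r x - 1\<bar> \<partial>Q)"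
proof -
  let ?P = "density Q (\<lambda>x. ennreal (r x))"
  have "TV M ?P Q = (\<integral>x. dens M Q x * \<bar>r x - 1\<bar> \<partial>M)"
    unfolding TV_def dens_def[symmetric]
  proof (rule integral_cong_AE)
    show "AE x in M. \<bar>dens M ?P x - dens M Q x\<bar> = dens M Q x * \<bar>r x - 1\<bar>"
      using dens_density_mult[OF M Q r nn]
    proof eventually_elim
      case (elim x)
      have "dens M Q x * r x - dens M Q x = dens M Q x * (r x - 1)"
        by (simp add: algebra_simps)
      then show ?case
        using elim by (simp add: abs_mult abs_of_nonneg[OF dens_nonneg])
    qed
  qed measurable
  also have "\<dots> = (\<integral>x. \<bar>r x - 1\<bar> \<partial>Q)"
    by (rule dens_integral(1)[OF M Q, symmetric]) measurable
  finally show ?thesis .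
qed

lemma two_level_density:
  assumes M: "sigma_finite_measure M" and Q: "Q \<in> probs_ac M" and A: "A \<in> sets M"
    and c: "0 \<le> c1" "0 \<le> c2" and norm: "c1 * measure Q A + c2 * (1 - measure Q A) = 1"
  defines "P \<equiv> density Q (\<lambda>x. ennreal (two_level (space M) A c1 c2 x))"
  shows "P \<in> probs_ac M" and "measure P A = c1 * measure Q A"
proof -
  interpret Qp: prob_space Q using probs_acD[OF Q] by simp
  note sQ = probs_acD(2,3)[OF Q]
  let ?r = "two_level (space M) A c1 c2"
  have AQ: "A \<in> sets Q" using A sQ by simp
  have r[measurable]: "?r \<in> borel_measurable Q" using two_level_measurable[OF AQ] sQ by simp
  have nn: "0 \<le> ?r x" for x using c by (simp add: two_level_def)
  note ir = two_level_integral[OF Qp.prob_space_axioms AQ, of "space M" c1 c2]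
  have emP: "emeasure P S = ennreal (\<integral>x. ?r x * indicator S x \<partial>Q)" if S: "S \<in> sets M" for S
    unfolding P_def using S sQ ir(1) nn
    by (simp add: emeasure_density nn_integral_eq_integral integrable_real_mult_indicator ennreal_indicator[symmetric] ennreal_mult'[symmetric])
  have "(\<integral>x. ?r x * indicator (space M) x \<partial>Q) = (\<integral>x. ?r x \<partial>Q)"
    using sQ by (intro Bochner_Integration.integral_cong) auto
  then have "emeasure P (space P) = 1"
    using emP[of "space M"] ir(2) norm sQ unfolding P_def by simp
  then interpret Pp: prob_space P by (rule prob_spaceI)
  have "absolutely_continuous Q P"
    unfolding P_def by (rule absolutely_continuousI_density) (use r in measurable)
  then have "absolutely_continuous M P"
    using probs_acD(4)[OF Q] unfolding absolutely_continuous_def by blast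
  then show "P \<in> probs_ac M"
    using sQ Pp.prob_space_axioms unfolding probs_ac_def P_def by simp
  have "(\<integral>x. ?r x * indicator A x \<partial>Q) = (\<integral>x. c1 * indicator A x \<partial>Q)"
    by (intro Bochner_Integration.integral_cong) (auto simp: two_level_def indicator_def)
  then have "emeasure P A = ennreal (c1 * measure Q A)"
    using emP[OF A] AQ by simp
  then show "measure P A = c1 * measure Q A"
    using c by (simp add: measure_def)
qed

lemma binary_KL_attained:
  assumes M: "sigma_finite_measure M" and Q: "Q \<in> probs_ac M" and A: "A \<in> sets M"
    and b: "measure Q A = b" "0 < b" "b < 1" and a: "b \<le> a" "a \<le> 1"
  shows "\<exists>P \<in> probs_ac M. TV M P Q = 2 * (a - b) \<and> KL_div P Q = ereal (binary_KL a b)"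
proof -
  interpret Qp: prob_space Q using probs_acD[OF Q] by simp
  note sQ = probs_acD(2,3)[OF Q]
  define c1 where "c1 = a / b"
  define c2 where "c2 = (1 - a) / (1 - b)"
  let ?r = "two_level (space M) A c1 c2"
  define P where "P = density Q (\<lambda>x. ennreal (?r x))"
  have c: "1 \<le> c1" "0 \<le> c2" "c2 \<le> 1" using a b by (auto simp: c1_def c2_def)
  have norm: "c1 * b + c2 * (1 - b) = 1" using b by (simp add: c1_def c2_def)
  have P: "P \<in> probs_ac M" and PA: "measure P A = a"
    using two_level_density[OF M Q A, of c1 c2] c norm b unfolding P_def by (auto simp: c1_def)
  interpret Pp: prob_space P using probs_acD[OF P] by simp
  have AP: "A \<in> sets P" and AQ: "A \<in> sets Q" using A probs_acD[OF P] sQ by auto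
  have rM: "?r \<in> borel_measurable M" by (rule two_level_measurable[OF A refl])
  have nn: "0 \<le> ?r x" for x using c by (simp add: two_level_def)
  have ln_r: "ln (?r x) = two_level (space M) A (ln c1) (ln c2) x" for x
    using sets.sets_into_space[OF A] by (rule ln_two_level)
  note iP = two_level_integral[OF Pp.prob_space_axioms AP probs_acD(3)[OF P], of "ln c1" "ln c2"]
  have "KL_div P Q = ereal (ln c1 * a + ln c2 * (1 - a))"
    unfolding P_def using iP PA ln_r sQ rM nn Pp.prob_space_axioms
    by (subst KL_div_density) (simp_all add: P_def measurable_cong_sets[OF sQ(1) refl])
  also have "ln c1 * a + ln c2 * (1 - a) = binary_KL a b"
    by (simp add: binary_KL_def c1_def c2_def)
  finally have KL: "KL_div P Q = ereal (binary_KL a b)" .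
  have "TV M P Q = (\<integral>x. \<bar>?r x - 1\<bar> \<partial>Q)"
    unfolding P_def by (rule TV_density[OF M Q rM nn])
  also have "\<dots> = (\<integral>x. two_level (space M) A (c1 - 1) (1 - c2) x \<partial>Q)"
    using sQ c by (intro Bochner_Integration.integral_cong) (auto intro: abs_two_level_minus_one)
  also have "\<dots> = (c1 - 1) * b + (1 - c2) * (1 - b)"
    using two_level_integral(2)[OF Qp.prob_space_axioms AQ sQ(2)] b by simp
  also have "\<dots> = 2 * (a - b)" using b by (simp add: c1_def c2_def field_simps)
  finally show ?thesis using KL P by blast
qed


section \<open>Identification of D*(v,Q) with Vajda's function\<close>

lemma binary_KL_values_realised:
  assumes M: "sigma_finite_measure \<mu>" and Q: "Q \<in> probs_ac \<mu>"
    and range: "measure Q ` sets \<mu> = {0..1}" and s: "s \<in> binary_KL_values v"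
  shows "\<exists>P \<in> probs_ac \<mu>. TV \<mu> P Q = v \<and> KL_div P Q = s"
proof -
  obtain a b where ab: "s = ereal (binary_KL a b)" "0 < b" "b < 1" "b \<le> a" "a \<le> 1" "a - b = v / 2"
    using s unfolding binary_KL_values_def by blast
  then have "b \<in> measure Q ` sets \<mu>"
    using range by simp
  then obtain A where "A \<in> sets \<mu>" "measure Q A = b"
    by blast
  from binary_KL_attained[OF M Q this ab(2-5)] ab(1,6) show ?thesis by auto
qed

lemma Dstar_eq_binary_KL:
  assumes M: "sigma_finite_measure \<mu>" and Q: "Q \<in> probs_ac \<mu>"
    and range: "measure Q ` sets \<mu> = {0..1}" and v: "0 < v"
  shows "Dstar \<mu> v Q = Inf (binary_KL_values v)"
proof (rule antisym)
  show "Dstar \<mu> v Q \<le> Inf (binary_KL_values v)"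
  proof (rule Inf_greatest)
    fix s assume "s \<in> binary_KL_values v"
    then obtain P where "P \<in> probs_ac \<mu>" "TV \<mu> P Q = v" "KL_div P Q = s"
      using binary_KL_values_realised[OF M Q range] by blast
    then show "Dstar \<mu> v Q \<le> s"
      unfolding Dstar_def by (intro Inf_lower) auto
  qed
  show "Inf (binary_KL_values v) \<le> Dstar \<mu> v Q"
    unfolding Dstar_def using KL_ge_binary_KL_values[OF M _ Q v] by (auto intro!: Inf_greatest)
qed

lemma binary_KL_le_vajda_L_on:
  assumes v: "0 < v"
  shows "Inf (binary_KL_values v) \<le> vajda_L_on TYPE('b) v"
  unfolding vajda_L_on_def using KL_ge_binary_KL_values[OF _ _ _ v] by (auto intro!: Inf_greatest)

lemma vajda_L_on_le_binary_KL:
  assumes M: "sigma_finite_measure (\<mu> :: 'a measure)" and Q: "Q \<in> probs_ac \<mu>"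
    and range: "measure Q ` sets \<mu> = {0..1}"
  shows "vajda_L_on TYPE('a) v \<le> Inf (binary_KL_values v)"
proof (rule Inf_greatest)
  fix s assume "s \<in> binary_KL_values v"
  then obtain P where "P \<in> probs_ac \<mu>" "TV \<mu> P Q = v" "KL_div P Q = s"
    using binary_KL_values_realised[OF M Q range] by blast
  then show "vajda_L_on TYPE('a) v \<le> s"
    unfolding vajda_L_on_def using M Q by (intro Inf_lower) blast
qed

theorem theorem2:
  fixes \<mu> Q :: "'a measure" and v :: real
  assumes "sigma_finite_measure \<mu>"
    and "Q \<in> probs_ac \<mu>"
    and "measure Q ` sets \<mu> = {0..1}"
    and "0 < v" and "v < 2"
  shows "Dstar \<mu> v Q = vajda_L_on TYPE('a) v \<and> Dstar \<mu> v Q \<le> vajda_L_on TYPE('b) v"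
proof -
  have D: "Dstar \<mu> v Q = Inf (binary_KL_values v)"
    using Dstar_eq_binary_KL assms(1-4) .
  have "vajda_L_on TYPE('a) v = Inf (binary_KL_values v)"
    using vajda_L_on_le_binary_KL[OF assms(1-3)] binary_KL_le_vajda_L_on[OF assms(4)]
    by (rule antisym)
  then show ?thesis
    using D binary_KL_le_vajda_L_on[OF assms(4)] by simp
qed

end
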